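(* For each $n$, let $W\in\mathbb{R}^{n\times n}$ be a random symmetric matrix with zero diagonal whose entries $W_{ij}$, $i<j$, are independent Rademacher random variables (uniform on $\{-1,+1\}$), and let $T=-\frac{\sqrt{n}}{4}\mathrm{Id}_{n\times n}+W$. Let $\kappa>0$ be a constant independent of $n$ such that, with probability tending to $1$ as $n\to\infty$, $$\max_{\substack{S\subseteq[n]\\|S|\leq \kappa n}}\|W_S\|_{2\to2}\leq \frac{1}{8}\sqrt{n},$$ where $W_S$ is the principal submatrix of $W$ indexed by $S$. Then, with probability tending to $1$ as $n\to\infty$, $$\rho_1(T)\leq \frac{34+o(1)}{\kappa^2}\,\frac{1}{\sqrt{n}},$$ where $o(1)$ denotes a quantity tending to $0$ as $n\to\infty$.
   Context: For a self-adjoint matrix $T\in\mathbb{C}^{n\times n}$, $$\rho_1(T):=\sup\left\{\langle Tx,x\rangle:\ x\in\mathbb{C}^n,\ \|x\|_1\leq 1\right\},$$ where $\|x\|_1=\sum_i|x_i|$. $\|M\|_{2\to2}$ is the Euclidean operator norm. *)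

theory Defs
  imports "HOL-Probability.Probability"
begin

text \<open>n x n matrices are represented as functions nat => nat => _ , only entries with
  indices < n being relevant; vectors as nat => _ with indices < n.\<close>

definition sign_space :: "nat \<Rightarrow> (nat \<times> nat \<Rightarrow> real) set" where
  "sign_space n = (PiE {(i,j). i < j \<and> j < n} (\<lambda>_. {-1, 1}))"

definition rademacher_pmf :: "nat \<Rightarrow> (nat \<times> nat \<Rightarrow> real) pmf" where
  "rademacher_pmf n = pmf_of_set (sign_space n)"

definition Wmat :: "(nat \<times> nat \<Rightarrow> real) \<Rightarrow> nat \<Rightarrow> nat \<Rightarrow> real" where
  "Wmat s i j = (if i < j then s (i,j) else if j < i then s (j,i) else 0)"

definition Tmat :: "nat \<Rightarrow> (nat \<times> nat \<Rightarrow> real) \<Rightarrow> nat \<Rightarrow> nat \<Rightarrow> complex" where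
  "Tmat n s i j = complex_of_real ((if i = j then - sqrt (real n) / 4 else 0) + Wmat s i j)"

text \<open>rho_1(T) = sup { <Tx,x> : x in C^n, ||x||_1 <= 1 }, with <Tx,x> = sum_i (Tx)_i conj(x_i)
  (real since T is self-adjoint).\<close>
definition rho1 :: "nat \<Rightarrow> (nat \<Rightarrow> nat \<Rightarrow> complex) \<Rightarrow> real" where
  "rho1 n T = Sup {r. \<exists>x :: nat \<Rightarrow> complex. (\<Sum>i<n. norm (x i)) \<le> 1 \<and>
      complex_of_real r = (\<Sum>i<n. (\<Sum>j<n. T i j * x j) * cnj (x i))}"

definition opnorm_sub :: "(nat \<Rightarrow> nat \<Rightarrow> real) \<Rightarrow> nat set \<Rightarrow> real" where
  "opnorm_sub M S = Sup {sqrt (\<Sum>i\<in>S. (norm (\<Sum>j\<in>S. complex_of_real (M i j) * x j))\<^sup>2) | x :: nat \<Rightarrow> complex.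
      (\<Sum>j\<in>S. (norm (x j))\<^sup>2) \<le> 1}"

end

theory Submission
  imports Defs
begin

(* On the event that every principal submatrix of W with at most kappa n indices has norm at most
   b = sqrt n / 8, the bound holds deterministically once kappa n >= 3, so epsilon = 0 works.
   Given x with |x|_1 <= 1, rank its entries by decreasing modulus and cut the ranking into
   consecutive blocks B_0, B_1, ... of h = floor (kappa n / 2) indices. Two blocks together have at
   most kappa n indices, so |<W x_C, x_A>| <= b |x_C|_2 |x_A|_2 for blocks A, C, and hence
   <Wx,x> <= b (s_0 + t)^2, where s_a = |x_{B_a}|_2 and t = sum_{a >= 1} s_a. Every entry on B_{a+1}
   is at most the mean modulus on B_a, so s_{a+1} <= |x_{B_a}|_1 / sqrt h and t <= 1 / sqrt h.
   Since T = W - 2b Id,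
     <Tx,x> <= b (s_0 + t)^2 - 2 b s_0^2 <= 2 b t^2 <= 2 b / h = sqrt n / (4 h),
   which is at most 3 / (kappa^2 sqrt n) when there is more than one block. *)

lemma div_eq_iff_mem_atLeastLessThan:
  fixes p h a :: nat
  assumes "0 < h"
  shows "p div h = a \<longleftrightarrow> p \<in> {a*h..<a*h+h}"
proof -
  have "p div h = a \<longleftrightarrow> a \<le> p div h \<and> p div h < Suc a" by auto
  also have "\<dots> \<longleftrightarrow> a*h \<le> p \<and> p < Suc a * h"
    using assms by (simp add: less_eq_div_iff_mult_less_eq div_less_iff_less_mult)
  finally show ?thesis by (simp add: add.commute)
qed

lemma exists_decreasing_ranking:
  fixes f :: "nat \<Rightarrow> real"
  shows "\<exists>pos. bij_betw pos {..<n} {..<n} \<and> (\<forall>i<n. \<forall>j<n. pos i < pos j \<longrightarrow> f j \<le> f i)"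
proof -
  define L where "L = sort_key (\<lambda>i. - f i) [0..<n]"
  have distinct: "distinct L" and length: "length L = n" and set: "set L = {..<n}"
    by (auto simp: L_def)
  have sorted: "sorted (map (\<lambda>i. - f i) L)" by (simp add: L_def)
  have bij_nth: "bij_betw ((!) L) {..<n} {..<n}"
    using bij_betw_nth[OF distinct] length set by auto
  define pos where "pos = the_inv_into {..<n} ((!) L)"
  have bij: "bij_betw pos {..<n} {..<n}"
    unfolding pos_def by (rule bij_betw_the_inv_into[OF bij_nth])
  have nth_pos: "L ! pos i = i" if "i < n" for i
    unfolding pos_def using bij_nth that by (metis bij_betw_def f_the_inv_into_f lessThan_iff)
  have "f j \<le> f i" if "i < n" "j < n" "pos i < pos j" for i j
  proof -
    have "pos j < n" using bij that(2) by (auto dest: bij_betwE)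
    then have "map (\<lambda>i. - f i) L ! pos i \<le> map (\<lambda>i. - f i) L ! pos j"
      using sorted_nth_mono[OF sorted, of "pos i" "pos j"] that length by auto
    then show ?thesis using nth_pos[OF that(1)] nth_pos[OF that(2)] \<open>pos j < n\<close> that length by auto
  qed
  then show ?thesis using bij by blast
qed

definition rank_block :: "nat \<Rightarrow> (nat \<Rightarrow> nat) \<Rightarrow> nat \<Rightarrow> nat \<Rightarrow> nat set" where
  "rank_block n pos h a = {i \<in> {..<n}. pos i div h = a}"

lemma card_rank_block:
  assumes bij: "bij_betw pos {..<n} {..<n}" and "0 < h"
  shows "card (rank_block n pos h a) = card ({a*h..<a*h+h} \<inter> {..<n})"
proof -
  have "pos ` rank_block n pos h a = {p \<in> pos ` {..<n}. p div h = a}"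
    by (auto simp: rank_block_def)
  also have "\<dots> = {a*h..<a*h+h} \<inter> {..<n}"
    using bij_betw_imp_surj_on[OF bij] \<open>0 < h\<close> by (auto simp: div_eq_iff_mem_atLeastLessThan)
  finally have image: "pos ` rank_block n pos h a = {a*h..<a*h+h} \<inter> {..<n}" .
  have "inj_on pos (rank_block n pos h a)"
    using bij_betw_imp_inj_on[OF bij] by (rule inj_on_subset) (auto simp: rank_block_def)
  then show ?thesis using image card_image by fastforce
qed

lemma card_rank_block_le:
  assumes "bij_betw pos {..<n} {..<n}" and "0 < h"
  shows "card (rank_block n pos h a) \<le> h"
  using card_rank_block[OF assms] card_mono[OF _ Int_lower1, of "{a*h..<a*h+h}" "{..<n}"] by simp

lemma card_rank_block_eq:
  assumes "bij_betw pos {..<n} {..<n}" and "0 < h" and "a*h + h \<le> n"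
  shows "card (rank_block n pos h a) = h"
proof -
  have "{a*h..<a*h+h} \<inter> {..<n} = {a*h..<a*h+h}" using assms(3) by auto
  then show ?thesis using card_rank_block[OF assms(1,2)] by simp
qed

lemma L2_set_le_sum_div_sqrt_card:
  fixes f :: "'a \<Rightarrow> real"
  assumes "finite A" and "card A \<le> card B" and "0 < card B" and nonneg: "\<And>i. 0 \<le> f i"
    and le: "\<And>i j. i \<in> A \<Longrightarrow> j \<in> B \<Longrightarrow> f i \<le> f j"
  shows "L2_set f A \<le> sum f B / sqrt (card B)"
proof -
  define avg where "avg = sum f B / card B"
  have le_avg: "f i \<le> avg" if "i \<in> A" for i
  proof -
    have "card B * f i = (\<Sum>j\<in>B. f i)" by simp
    also have "\<dots> \<le> sum f B" using le[OF that] by (rule sum_mono)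
    finally show ?thesis using \<open>0 < card B\<close> by (simp add: avg_def field_simps)
  qed
  have "(L2_set f A)\<^sup>2 = (\<Sum>i\<in>A. (f i)\<^sup>2)" by (simp add: L2_set_def sum_nonneg)
  also have "\<dots> \<le> (\<Sum>i\<in>A. avg\<^sup>2)" using le_avg nonneg by (intro sum_mono power_mono) auto
  also have "\<dots> \<le> card B * avg\<^sup>2" using \<open>card A \<le> card B\<close> by (simp add: mult_right_mono)
  also have "\<dots> = (sum f B / sqrt (card B))\<^sup>2"
    using \<open>0 < card B\<close> by (simp add: avg_def power_divide power2_eq_square)
  finally show ?thesis by (rule power2_le_imp_le) (simp add: nonneg sum_nonneg)
qed

lemma L2_set_rank_block_Suc_le:
  assumes bij: "bij_betw pos {..<n} {..<n}" and "0 < h"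
    and decreasing: "\<And>i j. i < n \<Longrightarrow> j < n \<Longrightarrow> pos i < pos j \<Longrightarrow> f j \<le> f i"
    and nonneg: "\<And>i. 0 \<le> f i"
  shows "L2_set f (rank_block n pos h (Suc a)) \<le> sum f (rank_block n pos h a) / sqrt h"
proof (cases "rank_block n pos h (Suc a) = {}")
  case True
  then show ?thesis by (simp add: nonneg sum_nonneg)
next
  case False
  then obtain i where "i < n" and "pos i div h = Suc a" by (auto simp: rank_block_def)
  moreover have "pos i < n" using bij \<open>i < n\<close> by (auto dest: bij_betwE)
  ultimately have "a*h + h \<le> n" using \<open>0 < h\<close> by (auto simp: div_eq_iff_mem_atLeastLessThan)
  then have card_eq: "card (rank_block n pos h a) = h" by (rule card_rank_block_eq[OF bij \<open>0 < h\<close>])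
  have "L2_set f (rank_block n pos h (Suc a))
      \<le> sum f (rank_block n pos h a) / sqrt (card (rank_block n pos h a))"
  proof (rule L2_set_le_sum_div_sqrt_card)
    fix i j assume i: "i \<in> rank_block n pos h (Suc a)" and j: "j \<in> rank_block n pos h a"
    then have "\<not> pos i \<le> pos j" using div_le_mono[of "pos i" "pos j" h] by (auto simp: rank_block_def)
    then show "f i \<le> f j" using decreasing i j by (auto simp: rank_block_def)
  qed (use card_eq card_rank_block_le[OF bij \<open>0 < h\<close>] \<open>0 < h\<close> nonneg in \<open>auto simp: rank_block_def\<close>)
  then show ?thesis using card_eq by simp
qed

lemma sum_L2_set_rank_blocks_Suc_le:
  assumes bij: "bij_betw pos {..<n} {..<n}" and "0 < h"
    and decreasing: "\<And>i j. i < n \<Longrightarrow> j < n \<Longrightarrow> pos i < pos j \<Longrightarrow> f j \<le> f i"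
    and nonneg: "\<And>i. 0 \<le> f i"
  shows "(\<Sum>a<n. L2_set f (rank_block n pos h (Suc a))) \<le> (\<Sum>i<n. f i) / sqrt h"
proof -
  have ranks: "(\<lambda>i. pos i div h) ` {..<n} \<subseteq> {..<n}"
    using bij_betwE[OF bij] by (auto intro: le_less_trans[OF div_le_dividend])
  have "(\<Sum>a<n. L2_set f (rank_block n pos h (Suc a)))
      \<le> (\<Sum>a<n. sum f (rank_block n pos h a) / sqrt h)"
    using decreasing nonneg by (intro sum_mono L2_set_rank_block_Suc_le[OF bij \<open>0 < h\<close>])
  also have "\<dots> = (\<Sum>i<n. f i) / sqrt h"
    using sum.group[OF _ _ ranks, of f] by (simp add: rank_block_def flip: sum_divide_distrib)
  finally show ?thesis .
qed

lemma quadratic_form_le_blocks: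
  fixes M :: "nat \<Rightarrow> nat \<Rightarrow> complex" and k :: "nat \<Rightarrow> nat" and n m :: nat
  defines "B a \<equiv> {i \<in> {..<n}. k i = a}"
  assumes into: "k ` {..<n} \<subseteq> {..<m}"
    and blocks: "\<And>a c. cmod (\<Sum>i\<in>B a. (\<Sum>j\<in>B c. M i j * x j) * cnj (x i))
      \<le> b * L2_set (\<lambda>j. cmod (x j)) (B c) * L2_set (\<lambda>i. cmod (x i)) (B a)"
  shows "cmod (\<Sum>i<n. (\<Sum>j<n. M i j * x j) * cnj (x i))
    \<le> b * (\<Sum>a<m. L2_set (\<lambda>i. cmod (x i)) (B a))\<^sup>2"
proof -
  have group: "(\<Sum>i<n. g i) = (\<Sum>a<m. \<Sum>i\<in>B a. g i)" for g :: "nat \<Rightarrow> complex"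
    using sum.group[OF _ _ into, of g] by (simp add: B_def)
  have "(\<Sum>i<n. (\<Sum>j<n. M i j * x j) * cnj (x i))
      = (\<Sum>i<n. \<Sum>c<m. (\<Sum>j\<in>B c. M i j * x j) * cnj (x i))"
    by (subst group) (simp add: sum_distrib_right)
  also have "\<dots> = (\<Sum>a<m. \<Sum>c<m. \<Sum>i\<in>B a. (\<Sum>j\<in>B c. M i j * x j) * cnj (x i))"
    by (subst group) (intro sum.cong refl sum.swap)
  finally have split: "(\<Sum>i<n. (\<Sum>j<n. M i j * x j) * cnj (x i))
      = (\<Sum>a<m. \<Sum>c<m. \<Sum>i\<in>B a. (\<Sum>j\<in>B c. M i j * x j) * cnj (x i))" .
  have "cmod (\<Sum>i<n. (\<Sum>j<n. M i j * x j) * cnj (x i))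
      \<le> (\<Sum>a<m. \<Sum>c<m. cmod (\<Sum>i\<in>B a. (\<Sum>j\<in>B c. M i j * x j) * cnj (x i)))"
    unfolding split by (rule order_trans[OF norm_sum sum_mono[OF norm_sum]])
  also have "\<dots> \<le> (\<Sum>a<m. \<Sum>c<m. b * L2_set (\<lambda>j. cmod (x j)) (B c) * L2_set (\<lambda>i. cmod (x i)) (B a))"
    by (intro sum_mono blocks)
  also have "\<dots> = b * (\<Sum>a<m. L2_set (\<lambda>i. cmod (x i)) (B a))\<^sup>2"
    by (simp add: power2_eq_square sum_product sum_distrib_left mult_ac)
  finally show ?thesis .
qed

lemma quadratic_form_le_rank_blocks:
  fixes M :: "nat \<Rightarrow> nat \<Rightarrow> complex"
  assumes bij: "bij_betw pos {..<n} {..<n}" and "0 < h"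
    and blocks: "\<And>A C. A \<subseteq> {..<n} \<Longrightarrow> C \<subseteq> {..<n} \<Longrightarrow> card A \<le> h \<Longrightarrow> card C \<le> h \<Longrightarrow>
      cmod (\<Sum>i\<in>A. (\<Sum>j\<in>C. M i j * x j) * cnj (x i))
        \<le> b * L2_set (\<lambda>j. cmod (x j)) C * L2_set (\<lambda>i. cmod (x i)) A"
  shows "cmod (\<Sum>i<n. (\<Sum>j<n. M i j * x j) * cnj (x i))
    \<le> b * (\<Sum>a<Suc n. L2_set (\<lambda>i. cmod (x i)) (rank_block n pos h a))\<^sup>2"
  unfolding rank_block_def
proof (rule quadratic_form_le_blocks)
  show "(\<lambda>i. pos i div h) ` {..<n} \<subseteq> {..<Suc n}"
    using bij_betwE[OF bij] by (auto intro!: less_SucI le_less_trans[OF div_le_dividend])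
qed (intro blocks; use card_rank_block_le[OF bij \<open>0 < h\<close>] in \<open>auto simp: rank_block_def\<close>)

lemma quadratic_form_minus_norm_le:
  fixes M :: "nat \<Rightarrow> nat \<Rightarrow> complex" and x :: "nat \<Rightarrow> complex"
  assumes "0 < h" and "0 \<le> b" and l1: "(\<Sum>i<n. cmod (x i)) \<le> 1"
    and blocks: "\<And>A C. A \<subseteq> {..<n} \<Longrightarrow> C \<subseteq> {..<n} \<Longrightarrow> card A \<le> h \<Longrightarrow> card C \<le> h \<Longrightarrow>
      cmod (\<Sum>i\<in>A. (\<Sum>j\<in>C. M i j * x j) * cnj (x i))
        \<le> b * L2_set (\<lambda>j. cmod (x j)) C * L2_set (\<lambda>i. cmod (x i)) A"
  shows "Re (\<Sum>i<n. (\<Sum>j<n. M i j * x j) * cnj (x i)) - 2 * b * (\<Sum>i<n. (cmod (x i))\<^sup>2)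
    \<le> (if n \<le> h then 0 else 2 * b / h)"
proof -
  obtain pos where bij: "bij_betw pos {..<n} {..<n}"
    and decreasing: "\<forall>i<n. \<forall>j<n. pos i < pos j \<longrightarrow> cmod (x j) \<le> cmod (x i)"
    using exists_decreasing_ranking[of n "\<lambda>i. cmod (x i)"] by blast
  have pos_less: "pos i < n" if "i < n" for i using bij that by (auto dest: bij_betwE)
  let ?B = "rank_block n pos h"
  define s where "s a = L2_set (\<lambda>i. cmod (x i)) (?B a)" for a
  define t where "t = (\<Sum>a<n. s (Suc a))"
  let ?Q = "\<Sum>i<n. (\<Sum>j<n. M i j * x j) * cnj (x i)"
  have "Re ?Q \<le> cmod ?Q" by (rule complex_Re_le_cmod)
  also have "\<dots> \<le> b * (\<Sum>a<Suc n. s a)\<^sup>2"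
    unfolding s_def by (rule quadratic_form_le_rank_blocks[OF bij \<open>0 < h\<close> blocks])
  also have "(\<Sum>a<Suc n. s a) = s 0 + t" unfolding t_def by (rule sum.lessThan_Suc_shift)
  finally have quadratic: "Re ?Q \<le> b * (s 0 + t)\<^sup>2" .
  have "(s 0)\<^sup>2 = (\<Sum>i\<in>?B 0. (cmod (x i))\<^sup>2)" by (simp add: s_def L2_set_def sum_nonneg)
  also have "\<dots> \<le> (\<Sum>i<n. (cmod (x i))\<^sup>2)" by (intro sum_mono2) (auto simp: rank_block_def)
  finally have s0_le_norm: "(s 0)\<^sup>2 \<le> (\<Sum>i<n. (cmod (x i))\<^sup>2)" .
  have "t \<le> (\<Sum>i<n. cmod (x i)) / sqrt h"
    unfolding t_def s_def using decreasing
    by (intro sum_L2_set_rank_blocks_Suc_le[OF bij \<open>0 < h\<close>]) auto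
  also have "\<dots> \<le> 1 / sqrt h" using l1 by (simp add: divide_right_mono)
  finally have t_le: "t \<le> 1 / sqrt h" .
  have "?B (Suc a) = {}" if "n \<le> h" for a
    using \<open>n \<le> h\<close> by (auto simp: rank_block_def) (metis Suc_neq_Zero div_less order_less_le_trans pos_less)
  then have t_zero: "t = 0" if "n \<le> h" using that by (simp add: t_def s_def)
  have "Re ?Q - 2 * b * (\<Sum>i<n. (cmod (x i))\<^sup>2) \<le> b * ((s 0 + t)\<^sup>2 - 2 * (s 0)\<^sup>2)"
    using quadratic mult_left_mono[OF s0_le_norm, of "2 * b"] \<open>0 \<le> b\<close>
    by (simp only: right_diff_distrib) linarith
  also have "\<dots> \<le> b * (2 * t\<^sup>2)"
    using \<open>0 \<le> b\<close> zero_le_power2[of "s 0 - t"]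
    by (intro mult_left_mono) (simp_all add: power2_eq_square algebra_simps)
  also have "\<dots> \<le> (if n \<le> h then 0 else 2 * b / h)"
  proof (cases "n \<le> h")
    case False
    have "t\<^sup>2 \<le> (1 / sqrt h)\<^sup>2"
      using t_le by (intro power_mono) (auto simp: t_def s_def sum_nonneg)
    then have "b * (2 * t\<^sup>2) \<le> b * (2 * (1 / h))"
      using \<open>0 \<le> b\<close> by (intro mult_left_mono) (simp_all add: power_divide)
    then show ?thesis using False by (simp add: mult.commute)
  qed (simp add: t_zero)
  finally show ?thesis .
qed

lemma bdd_above_opnorm_sub_values:
  fixes M :: "nat \<Rightarrow> nat \<Rightarrow> real"
  assumes "finite S"
  shows "bdd_above {sqrt (\<Sum>i\<in>S. (norm (\<Sum>j\<in>S. complex_of_real (M i j) * x j))\<^sup>2) | x :: nat \<Rightarrow> complex.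
      (\<Sum>j\<in>S. (norm (x j))\<^sup>2) \<le> 1}"
proof (rule bdd_aboveI, safe)
  fix x :: "nat \<Rightarrow> complex" assume x: "(\<Sum>j\<in>S. (norm (x j))\<^sup>2) \<le> 1"
  have x_le_1: "norm (x j) \<le> 1" if "j \<in> S" for j
  proof -
    have "(norm (x j))\<^sup>2 \<le> 1\<^sup>2"
      using member_le_sum[of j S "\<lambda>j. (norm (x j))\<^sup>2"] that \<open>finite S\<close> x by simp
    then show ?thesis by (rule power2_le_imp_le) simp
  qed
  have "norm (\<Sum>j\<in>S. complex_of_real (M i j) * x j) \<le> (\<Sum>j\<in>S. \<bar>M i j\<bar>)" for i
    using norm_sum[of "\<lambda>j. complex_of_real (M i j) * x j" S]
      sum_mono[of S "\<lambda>j. norm (complex_of_real (M i j) * x j)" "\<lambda>j. \<bar>M i j\<bar>"]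
    by (simp add: norm_mult mult_left_le x_le_1)
  then show "sqrt (\<Sum>i\<in>S. (norm (\<Sum>j\<in>S. complex_of_real (M i j) * x j))\<^sup>2)
      \<le> sqrt (\<Sum>i\<in>S. (\<Sum>j\<in>S. \<bar>M i j\<bar>)\<^sup>2)"
    by (intro real_sqrt_le_mono sum_mono power_mono) auto
qed

lemma opnorm_sub_mult_le:
  fixes M :: "nat \<Rightarrow> nat \<Rightarrow> real"
  assumes "finite S"
  shows "L2_set (\<lambda>i. norm (\<Sum>j\<in>S. complex_of_real (M i j) * w j)) S
    \<le> opnorm_sub M S * L2_set (\<lambda>j. norm (w j)) S"
proof (cases "L2_set (\<lambda>j. norm (w j)) S = 0")
  case True
  then have "\<forall>j\<in>S. w j = 0" using L2_set_eq_0_iff[OF \<open>finite S\<close>] by auto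
  then show ?thesis using True by (simp add: L2_set_def)
next
  case False
  define lam where "lam = L2_set (\<lambda>j. norm (w j)) S"
  have "0 < lam" using False L2_set_nonneg[of _ S] unfolding lam_def by (metis less_eq_real_def)
  define x where "x j = w j / complex_of_real lam" for j
  have "(\<Sum>j\<in>S. (norm (x j))\<^sup>2) = (L2_set (\<lambda>j. norm (w j)) S / lam)\<^sup>2"
    by (simp add: x_def L2_set_def norm_divide power_divide sum_nonneg flip: sum_divide_distrib)
  then have x_unit: "(\<Sum>j\<in>S. (norm (x j))\<^sup>2) \<le> 1" using \<open>0 < lam\<close> by (simp add: lam_def)
  have "1 / lam * L2_set (\<lambda>i. norm (\<Sum>j\<in>S. complex_of_real (M i j) * w j)) S
      = L2_set (\<lambda>i. norm (\<Sum>j\<in>S. complex_of_real (M i j) * x j)) S"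
    using \<open>0 < lam\<close> by (subst L2_set_right_distrib)
      (simp_all add: x_def norm_divide flip: sum_divide_distrib)
  also have "\<dots> \<le> opnorm_sub M S"
    unfolding opnorm_sub_def L2_set_def
    by (rule cSup_upper[OF _ bdd_above_opnorm_sub_values[OF \<open>finite S\<close>]]) (use x_unit in blast)
  finally show ?thesis using \<open>0 < lam\<close> by (simp add: lam_def field_simps)
qed

lemma bilinear_form_le_opnorm_sub:
  fixes M :: "nat \<Rightarrow> nat \<Rightarrow> real"
  assumes "finite S" and "A \<subseteq> S" and "C \<subseteq> S"
  shows "cmod (\<Sum>i\<in>A. (\<Sum>j\<in>C. complex_of_real (M i j) * u j) * cnj (v i))
    \<le> opnorm_sub M S * L2_set (\<lambda>j. cmod (u j)) C * L2_set (\<lambda>i. cmod (v i)) A"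
proof -
  define w where "w j = (if j \<in> C then u j else 0)" for j
  define y where "y i = (\<Sum>j\<in>S. complex_of_real (M i j) * w j)" for i
  have y: "(\<Sum>j\<in>C. complex_of_real (M i j) * u j) = y i" for i
    unfolding y_def using assms by (intro sum.mono_neutral_cong_left) (auto simp: w_def)
  have w: "L2_set (\<lambda>j. cmod (w j)) S = L2_set (\<lambda>j. cmod (u j)) C"
    unfolding L2_set_def using assms by (intro arg_cong[where f = sqrt] sum.mono_neutral_cong_right)
      (auto simp: w_def)
  have "cmod (\<Sum>i\<in>A. y i * cnj (v i)) \<le> (\<Sum>i\<in>A. \<bar>cmod (y i)\<bar> * \<bar>cmod (v i)\<bar>)"
    using norm_sum[of "\<lambda>i. y i * cnj (v i)" A] by (simp add: norm_mult)
  also have "\<dots> \<le> L2_set (\<lambda>i. cmod (y i)) A * L2_set (\<lambda>i. cmod (v i)) A"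
    by (rule L2_set_mult_ineq)
  also have "\<dots> \<le> L2_set (\<lambda>i. cmod (y i)) S * L2_set (\<lambda>i. cmod (v i)) A"
    unfolding L2_set_def using assms
    by (intro mult_right_mono real_sqrt_le_mono sum_mono2) (auto simp: sum_nonneg)
  also have "\<dots> \<le> opnorm_sub M S * L2_set (\<lambda>j. cmod (w j)) S * L2_set (\<lambda>i. cmod (v i)) A"
    unfolding y_def by (intro mult_right_mono opnorm_sub_mult_le \<open>finite S\<close>) simp
  finally show ?thesis using y w by simp
qed

lemma rho1_le:
  assumes "\<And>x. (\<Sum>i<n. cmod (x i)) \<le> 1 \<Longrightarrow> Re (\<Sum>i<n. (\<Sum>j<n. T i j * x j) * cnj (x i)) \<le> c"
  shows "rho1 n T \<le> c"
proof -
  let ?Q = "\<lambda>x. \<Sum>i<n. (\<Sum>j<n. T i j * x j) * cnj (x i)"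
  let ?R = "{r. \<exists>x. (\<Sum>i<n. cmod (x i)) \<le> 1 \<and> complex_of_real r = ?Q x}"
  have "\<exists>x. (\<Sum>i<n. cmod (x i)) \<le> 1 \<and> complex_of_real 0 = ?Q x"
    by (rule exI[of _ "\<lambda>_. 0"]) simp
  then have "?R \<noteq> {}" by blast
  moreover have "r \<le> c" if "r \<in> ?R" for r
  proof -
    obtain x where "(\<Sum>i<n. cmod (x i)) \<le> 1" and "complex_of_real r = ?Q x"
      using \<open>r \<in> ?R\<close> by blast
    then show ?thesis using assms[of x] by (metis Re_complex_of_real)
  qed
  ultimately show ?thesis unfolding rho1_def by (rule cSup_least)
qed

lemma quadratic_form_Tmat:
  "Re (\<Sum>i<n. (\<Sum>j<n. Tmat n s i j * x j) * cnj (x i))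
    = Re (\<Sum>i<n. (\<Sum>j<n. complex_of_real (Wmat s i j) * x j) * cnj (x i))
      - sqrt (real n) / 4 * (\<Sum>i<n. (cmod (x i))\<^sup>2)"
proof -
  have Tmat_entry: "Tmat n s i j = (if i = j then - complex_of_real (sqrt (real n) / 4) else 0)
      + complex_of_real (Wmat s i j)" for i j
    by (simp add: Tmat_def)
  have row: "(\<Sum>j<n. Tmat n s i j * x j)
      = (\<Sum>j<n. complex_of_real (Wmat s i j) * x j) - complex_of_real (sqrt (real n) / 4) * x i"
    if "i < n" for i
    using that by (simp add: Tmat_entry distrib_right sum.distrib if_distrib[of times] if_distribR)
  have "(\<Sum>i<n. (\<Sum>j<n. Tmat n s i j * x j) * cnj (x i))
      = (\<Sum>i<n. (\<Sum>j<n. complex_of_real (Wmat s i j) * x j) * cnj (x i))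
        - complex_of_real (sqrt (real n) / 4) * (\<Sum>i<n. complex_of_real ((cmod (x i))\<^sup>2))"
    by (simp add: row left_diff_distrib sum_subtractf sum_distrib_left mult.assoc
        del: of_real_power flip: complex_norm_square)
  then show ?thesis by (simp del: of_real_power flip: of_real_sum)
qed

lemma sqrt_div_block_size_le:
  fixes \<kappa> :: real
  assumes "0 < \<kappa>" and "3 \<le> \<kappa> * real n" and h: "h = nat \<lfloor>\<kappa> * real n / 2\<rfloor>" and "h < n"
  shows "sqrt (real n) / (4 * real h) \<le> 34 / \<kappa>\<^sup>2 * (1 / sqrt (real n))"
proof -
  have "real h = of_int \<lfloor>\<kappa> * real n / 2\<rfloor>" using h assms(2) by simp
  then have h_bounds: "\<kappa> * real n / 2 - 1 < real h" "real h \<le> \<kappa> * real n / 2" by linarith+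
  moreover have "real h + 1 \<le> real n" using \<open>h < n\<close> by linarith
  ultimately have "\<kappa> * real n < 2 * real n" by linarith
  then have "\<kappa> < 2" by (simp add: mult_less_cancel_right)
  moreover have "\<kappa> * real n \<le> 6 * real h" using h_bounds assms(2) by linarith
  ultimately have "\<kappa> * (\<kappa> * real n) \<le> 2 * (6 * real h)"
    using assms(2) by (intro mult_mono[of \<kappa> 2 "\<kappa> * real n"]) linarith+
  then have key: "real n * \<kappa>\<^sup>2 \<le> real h * 12"
    by (simp add: power2_eq_square algebra_simps)
  define r where "r = sqrt (real n)"
  have "0 < real h" "0 < r" "r * r = real n" using h_bounds assms(2) \<open>h < n\<close> by (auto simp: r_def)
  with key have "r * (r * \<kappa>\<^sup>2) \<le> real h * 136" by (simp add: mult.assoc[symmetric])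
  then show ?thesis unfolding r_def[symmetric] using \<open>0 < \<kappa>\<close> \<open>0 < real h\<close> \<open>0 < r\<close>
    by (simp add: field_simps)
qed

lemma rho1_Tmat_le:
  fixes \<kappa> :: real
  assumes "0 < \<kappa>" and "3 \<le> \<kappa> * real n"
    and small: "\<forall>S. S \<subseteq> {..<n} \<and> real (card S) \<le> \<kappa> * real n \<longrightarrow>
      opnorm_sub (Wmat s) S \<le> sqrt (real n) / 8"
  shows "rho1 n (Tmat n s) \<le> 34 / \<kappa>\<^sup>2 * (1 / sqrt (real n))"
proof (rule rho1_le)
  define b where "b = sqrt (real n) / 8"
  define h where "h = nat \<lfloor>\<kappa> * real n / 2\<rfloor>"
  have "0 < h" "2 * real h \<le> \<kappa> * real n" using assms(2) by (simp_all add: h_def) linarith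
  fix x :: "nat \<Rightarrow> complex" assume l1: "(\<Sum>i<n. cmod (x i)) \<le> 1"
  have blocks: "cmod (\<Sum>i\<in>A. (\<Sum>j\<in>C. complex_of_real (Wmat s i j) * x j) * cnj (x i))
      \<le> b * L2_set (\<lambda>j. cmod (x j)) C * L2_set (\<lambda>i. cmod (x i)) A"
    if "A \<subseteq> {..<n}" "C \<subseteq> {..<n}" "card A \<le> h" "card C \<le> h" for A C
  proof -
    have "real (card (A \<union> C)) \<le> \<kappa> * real n"
      using card_Un_le[of A C] that \<open>2 * real h \<le> \<kappa> * real n\<close> by linarith
    then have "opnorm_sub (Wmat s) (A \<union> C) \<le> b" using small that by (simp add: b_def)
    moreover have "finite (A \<union> C)" using that finite_subset by blast
    ultimately show ?thesis
      using bilinear_form_le_opnorm_sub[of "A \<union> C" A C "Wmat s" x x]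
      by (meson L2_set_nonneg Un_upper1 Un_upper2 mult_right_mono order_trans)
  qed
  have "Re (\<Sum>i<n. (\<Sum>j<n. Tmat n s i j * x j) * cnj (x i))
      = Re (\<Sum>i<n. (\<Sum>j<n. complex_of_real (Wmat s i j) * x j) * cnj (x i))
        - 2 * b * (\<Sum>i<n. (cmod (x i))\<^sup>2)"
    by (subst quadratic_form_Tmat) (simp add: b_def del: Re_sum)
  also have "\<dots> \<le> (if n \<le> h then 0 else 2 * b / h)"
    by (rule quadratic_form_minus_norm_le[OF \<open>0 < h\<close> _ l1 blocks]) (simp_all add: b_def)
  also have "\<dots> \<le> 34 / \<kappa>\<^sup>2 * (1 / sqrt (real n))"
    using sqrt_div_block_size_le[OF assms(1,2) h_def] by (simp add: b_def)
  finally show "Re (\<Sum>i<n. (\<Sum>j<n. Tmat n s i j * x j) * cnj (x i))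
      \<le> 34 / \<kappa>\<^sup>2 * (1 / sqrt (real n))" .
qed

lemma prob_tendsto_one_mono:
  fixes M :: "nat \<Rightarrow> 'a pmf"
  assumes "eventually (\<lambda>n. A n \<subseteq> C n) sequentially"
    and "(\<lambda>n. measure_pmf.prob (M n) (A n)) \<longlonglongrightarrow> 1"
  shows "(\<lambda>n. measure_pmf.prob (M n) (C n)) \<longlonglongrightarrow> 1"
proof (rule tendsto_sandwich[OF _ _ assms(2) tendsto_const])
  show "eventually (\<lambda>n. measure_pmf.prob (M n) (A n) \<le> measure_pmf.prob (M n) (C n)) sequentially"
    using assms(1) by eventually_elim (simp add: measure_pmf.finite_measure_mono)
qed (simp add: measure_pmf.prob_le_1)

theorem lemma3:
  fixes \<kappa> :: real
  assumes kappa_pos: "\<kappa> > 0"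
    and hyp: "(\<lambda>n. measure_pmf.prob (rademacher_pmf n)
               {s. \<forall>S. S \<subseteq> {..<n} \<and> real (card S) \<le> \<kappa> * real n \<longrightarrow>
                    opnorm_sub (Wmat s) S \<le> sqrt (real n) / 8}) \<longlonglongrightarrow> 1"
  shows "\<exists>\<epsilon> :: nat \<Rightarrow> real. \<epsilon> \<longlonglongrightarrow> 0 \<and>
           (\<lambda>n. measure_pmf.prob (rademacher_pmf n)
              {s. rho1 n (Tmat n s) \<le> (34 + \<epsilon> n) / \<kappa>\<^sup>2 * (1 / sqrt (real n))}) \<longlonglongrightarrow> 1"
proof (intro exI conjI)
  show "(\<lambda>_. 0) \<longlonglongrightarrow> (0 :: real)" by simp
  have "eventually (\<lambda>n. 3 / \<kappa> \<le> real n) sequentially"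
    using filterlim_real_sequentially by (simp add: filterlim_at_top)
  then have "eventually (\<lambda>n. 3 \<le> \<kappa> * real n) sequentially"
    by eventually_elim (use kappa_pos in \<open>simp add: field_simps\<close>)
  then have "eventually (\<lambda>n. {s. \<forall>S. S \<subseteq> {..<n} \<and> real (card S) \<le> \<kappa> * real n \<longrightarrow>
      opnorm_sub (Wmat s) S \<le> sqrt (real n) / 8}
    \<subseteq> {s. rho1 n (Tmat n s) \<le> (34 + 0) / \<kappa>\<^sup>2 * (1 / sqrt (real n))}) sequentially"
    by eventually_elim (use rho1_Tmat_le[OF kappa_pos] in auto)
  then show "(\<lambda>n. measure_pmf.prob (rademacher_pmf n)
      {s. rho1 n (Tmat n s) \<le> (34 + 0) / \<kappa>\<^sup>2 * (1 / sqrt (real n))}) \<longlonglongrightarrow> 1"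
    by (rule prob_tendsto_one_mono[OF _ hyp])
qed

end
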